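(* Let $H=\sum_{a=1}^m\lambda_aE_a$ be a $k$-local Hamiltonian and $G=\sum_{b=1}^{m'}\kappa_bF_b$ a $k'$-local Hamiltonian. Then, for a universal implied constant, $$\|[H,G]\|_F\lesssim(4(k'+k))^{3k}\|H\|_{2,\mathrm{loc}}\|G\|_F,\qquad \|[H,G]\|_{2,\mathrm{loc}}\lesssim(4(k'+k))^{3k}\|H\|_{2,\mathrm{loc}}\|G\|_{2,\mathrm{loc}}.$$
   Context: $\mathcal{P}$ denotes the set of $n$-qubit tensor products of Pauli matrices; $\mathrm{supp}(P)$ is the set of qubits on which $P$ acts non-trivially. A $k$-local Hamiltonian is $H=\sum_a\lambda_aE_a$ with real $\lambda_a$ and distinct non-identity Paulis $E_a$ with $|\mathrm{supp}(E_a)|\le k$. For any operator $A=\sum_{X\in\mathcal{P}}\xi_XX$ (Pauli expansion, possibly complex coefficients), $\|A\|_{1,\mathrm{loc}}=\max_{i\in[n]}\sum_{X:\,i\in\mathrm{supp}(X)}|\xi_X|$ and $\|A\|_{2,\mathrm{loc}}=\max_{i\in[n]}\big(\sum_{X:\,i\in\mathrm{supp}(X)}|\xi_X|^2\big)^{1/2}$. $\|\cdot\|_F$ is the Frobenius norm and $f\lesssim g$ means $f\le c\,g$ for a universal constant $c$. *)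

theory Defs
  imports Complex_Main "Jordan_Normal_Form.Matrix"
begin

(* Single-qubit Pauli matrices: 0 = I, 1 = X, 2 = Y, 3 = Z *)
definition pauli1 :: "nat \<Rightarrow> complex mat" where
  "pauli1 a = mat 2 2 (\<lambda>(r, c).
     if a = 1 then (if r \<noteq> c then 1 else 0)
     else if a = 2 then (if r = 0 \<and> c = 1 then - \<i> else if r = 1 \<and> c = 0 then \<i> else 0)
     else if a = 3 then (if r = c then (if r = 0 then 1 else -1) else 0)
     else (if r = c then 1 else 0))"

definition paulis :: "nat \<Rightarrow> (nat \<Rightarrow> nat) set" where
  "paulis n = {p. (\<forall>i<n. p i < 4) \<and> (\<forall>i\<ge>n. p i = 0)}"

definition supp :: "(nat \<Rightarrow> nat) \<Rightarrow> nat set" where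
  "supp p = {i. p i \<noteq> 0}"

(* tensor product  pauli1 (p 0) \<otimes> ... \<otimes> pauli1 (p (n-1)),  qubit i = bit i of the index *)
definition pauli_mat :: "nat \<Rightarrow> (nat \<Rightarrow> nat) \<Rightarrow> complex mat" where
  "pauli_mat n p = mat (2^n) (2^n) (\<lambda>(r, c).
     \<Prod>i<n. pauli1 (p i) $$ (r div 2^i mod 2, c div 2^i mod 2))"

definition op_of :: "nat \<Rightarrow> ((nat \<Rightarrow> nat) \<Rightarrow> complex) \<Rightarrow> complex mat" where
  "op_of n \<xi> = mat (2^n) (2^n) (\<lambda>(r, c). \<Sum>X\<in>paulis n. \<xi> X * pauli_mat n X $$ (r, c))"

definition pauli_coeff :: "nat \<Rightarrow> complex mat \<Rightarrow> (nat \<Rightarrow> nat) \<Rightarrow> complex" where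
  "pauli_coeff n A = (THE \<xi>. (\<forall>X. X \<notin> paulis n \<longrightarrow> \<xi> X = 0) \<and> A = op_of n \<xi>)"

(* max over i \<in> [n]; the inserted 0 only matters for n = 0 since all terms are \<ge> 0 *)
definition loc1_norm :: "nat \<Rightarrow> complex mat \<Rightarrow> real" where
  "loc1_norm n A = Max (insert 0 ((\<lambda>i. \<Sum>X\<in>{X\<in>paulis n. i \<in> supp X}. cmod (pauli_coeff n A X)) ` {..<n}))"

definition loc2_norm :: "nat \<Rightarrow> complex mat \<Rightarrow> real" where
  "loc2_norm n A = Max (insert 0 ((\<lambda>i. sqrt (\<Sum>X\<in>{X\<in>paulis n. i \<in> supp X}. (cmod (pauli_coeff n A X))\<^sup>2)) ` {..<n}))"

definition frob_norm :: "complex mat \<Rightarrow> real" where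
  "frob_norm A = sqrt (\<Sum>r<dim_row A. \<Sum>c<dim_col A. (cmod (A $$ (r, c)))\<^sup>2)"

definition commutator :: "complex mat \<Rightarrow> complex mat \<Rightarrow> complex mat" where
  "commutator A B = A * B - B * A"

definition is_klocal_ham :: "nat \<Rightarrow> nat \<Rightarrow> complex mat \<Rightarrow> bool" where
  "is_klocal_ham n k H \<longleftrightarrow> (\<exists>lam :: (nat \<Rightarrow> nat) \<Rightarrow> real.
     (\<forall>X. lam X \<noteq> 0 \<longrightarrow> X \<in> paulis n \<and> X \<noteq> (\<lambda>_. 0) \<and> card (supp X) \<le> k) \<and>
     H = op_of n (\<lambda>X. complex_of_real (lam X)))"

end

(*
  Write H = sum_X lam_X X and G = sum_Y mu_Y Y. Pauli strings multiply as X Y = omega(X, Y) (XY)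
  with a unimodular phase, and X, Y commute unless they anticommute at some common site; hence the
  coefficient of Z in [H, G] is at most 2 a_Z, where a_Z (comm_weight) sums |lam_X| |mu_XZ| over
  such X.

  Group the X contributing to a_Z by their restriction r to supp Z. Since supp Z has at most k + k'
  sites there are at most (3 (k + k') + 1)^k classes, and Cauchy-Schwarz within each class bounds
  a_Z^2 by (3 (k + k') + 1)^k times a sum of L(r) K(rZ), where L(r) (lam_mass) is the lam-mass of
  the X extending r and K(q) (mu_mass) the mu-mass of the Y extending q by at most k further sites.
  The pairs (r, rZ) are distinct for distinct (Z, r) and overlap, so charging each pair to a common
  site, and noting that each X has at most 2^k restrictions and each Y at most (k' + 1)^k such q,
  bounds the sum of a_Z^2 over all Z (resp. over the Z acting on a given site) by
  (k + k') 2^k (k' + 1)^k times the site masses of lam and mu. Parseval turns Pauli coefficients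
  into Frobenius and local norms.
*)

theory Submission
  imports Defs "HOL-Analysis.Convex"
begin

section \<open>Products of Pauli strings\<close>

lemma binary_digit_add_pow2:
  fixes m n i :: nat
  assumes "i < n"
  shows "(m + 2^n) div 2^i mod 2 = m div 2^i mod 2"
proof -
  obtain d where d: "n - i = Suc d" using assms by (metis Suc_diff_Suc)
  have "(2::nat)^n = 2^i * 2^(n - i)" using assms by (simp flip: power_add)
  then have "(m + 2^n) div 2^i = m div 2^i + 2 * 2^d" using d by simp
  then show ?thesis by simp
qed

lemma sum_prod_binary_digits:
  fixes f :: "nat \<Rightarrow> nat \<Rightarrow> 'a::comm_semiring_1"
  shows "(\<Sum>m<2^n. \<Prod>i<n. f i (m div 2^i mod 2)) = (\<Prod>i<n. f i 0 + f i 1)"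
proof (induction n)
  case 0
  then show ?case by simp
next
  case (Suc n)
  define g where "g m = (\<Prod>i<Suc n. f i (m div 2^i mod 2))" for m
  define P where "P m = (\<Prod>i<n. f i (m div 2^i mod 2))" for m
  have "(\<Sum>m<2^Suc n. g m) = (\<Sum>m\<in>{0..<2^n}. g m) + (\<Sum>m\<in>{2^n..<2^n + 2^n}. g m)"
    by (subst sum.atLeastLessThan_concat) (auto simp: lessThan_atLeast0 mult_2)
  also have "\<dots> = (\<Sum>m<2^n. g m) + (\<Sum>m<2^n. g (m + 2^n))"
    using sum.shift_bounds_nat_ivl[of g 0 "2^n" "2^n"] by (simp add: lessThan_atLeast0)
  also have "\<dots> = (\<Sum>m<2^n. P m) * f n 0 + (\<Sum>m<2^n. P m) * f n 1"
  proof -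
    have "g m = P m * f n 0" "g (m + 2^n) = P m * f n 1" if "m < 2^n" for m
      using that by (simp_all add: g_def P_def prod.lessThan_Suc binary_digit_add_pow2)
    then show ?thesis by (simp add: sum_distrib_right)
  qed
  finally show ?case
    using Suc.IH by (simp add: g_def P_def prod.lessThan_Suc distrib_left)
qed

text \<open>For labels below 4, \<open>pauli1 a * pauli1 b = label_phase a b * pauli1 (label_mult a b)\<close>;
  \<open>6 - a - b\<close> is the third non-identity label, as in \<open>X Y = \<i> Z\<close>.\<close>

definition label_mult :: "nat \<Rightarrow> nat \<Rightarrow> nat" where
  "label_mult a b = (if a = 0 then b else if b = 0 then a else if a = b then 0 else 6 - a - b)"

definition label_phase :: "nat \<Rightarrow> nat \<Rightarrow> complex" where
  "label_phase a b = (if a = 0 \<or> b = 0 \<or> a = b then 1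
     else if (a = 1 \<and> b = 2) \<or> (a = 2 \<and> b = 3) \<or> (a = 3 \<and> b = 1) then \<i> else - \<i>)"

lemma less_4_cases: "(a::nat) < 4 \<Longrightarrow> a = 0 \<or> a = 1 \<or> a = 2 \<or> a = 3"
  by auto

lemma pauli1_mult_entry:
  assumes "a < 4" "b < 4" "x < 2" "y < 2"
  shows "pauli1 a $$ (x, 0) * pauli1 b $$ (0, y) + pauli1 a $$ (x, 1) * pauli1 b $$ (1, y)
       = label_phase a b * pauli1 (label_mult a b) $$ (x, y)"
proof -
  have "x = 0 \<or> x = 1" "y = 0 \<or> y = 1" using assms(3,4) by auto
  then show ?thesis using less_4_cases[OF assms(1)] less_4_cases[OF assms(2)]
    by (auto simp: pauli1_def label_phase_def label_mult_def)
qed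

lemma pauli1_orthogonal:
  assumes "a < 4" "b < 4"
  shows "(cnj (pauli1 a $$ (0, 0)) * pauli1 b $$ (0, 0) + cnj (pauli1 a $$ (0, 1)) * pauli1 b $$ (0, 1))
       + (cnj (pauli1 a $$ (1, 0)) * pauli1 b $$ (1, 0) + cnj (pauli1 a $$ (1, 1)) * pauli1 b $$ (1, 1))
       = (if a = b then 2 else 0)"
  using less_4_cases[OF assms(1)] less_4_cases[OF assms(2)] by (auto simp: pauli1_def)

lemma label_mult_0 [simp]: "label_mult a 0 = a" "label_mult 0 a = a"
  by (auto simp: label_mult_def)

lemma label_mult_less_4: "a < 4 \<Longrightarrow> b < 4 \<Longrightarrow> label_mult a b < 4"
  by (auto simp: label_mult_def)

lemma label_mult_commute: "label_mult a b = label_mult b a"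
  by (auto simp: label_mult_def)

lemma label_mult_cancel: "a < 4 \<Longrightarrow> b < 4 \<Longrightarrow> label_mult a (label_mult a b) = b"
  using less_4_cases[of a] less_4_cases[of b] by (auto simp: label_mult_def)

lemma label_phase_commute: "a = 0 \<or> b = 0 \<or> a = b \<Longrightarrow> label_phase a b = label_phase b a"
  by (auto simp: label_phase_def)

lemma norm_label_phase [simp]: "cmod (label_phase a b) = 1"
  by (auto simp: label_phase_def)

definition pauli_mult :: "(nat \<Rightarrow> nat) \<Rightarrow> (nat \<Rightarrow> nat) \<Rightarrow> nat \<Rightarrow> nat" where
  "pauli_mult X Y = (\<lambda>i. label_mult (X i) (Y i))"

definition pauli_phase :: "nat \<Rightarrow> (nat \<Rightarrow> nat) \<Rightarrow> (nat \<Rightarrow> nat) \<Rightarrow> complex" where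
  "pauli_phase n X Y = (\<Prod>i<n. label_phase (X i) (Y i))"

definition pauli_entry :: "nat \<Rightarrow> (nat \<Rightarrow> nat) \<Rightarrow> nat \<Rightarrow> nat \<Rightarrow> complex" where
  "pauli_entry n X r c = (\<Prod>i<n. pauli1 (X i) $$ (r div 2^i mod 2, c div 2^i mod 2))"

lemma paulis_less_4: "X \<in> paulis n \<Longrightarrow> X i < 4"
  by (cases "i < n") (auto simp: paulis_def)

lemma finite_paulis: "finite (paulis n)"
proof -
  have "paulis n = {f. \<forall>x. (x \<in> {..<n} \<longrightarrow> f x \<in> {..<4}) \<and> (x \<notin> {..<n} \<longrightarrow> f x = 0)}"
    by (auto simp: paulis_def)
  then show ?thesis using finite_set_of_finite_funs[of "{..<n}" "{..<4::nat}" 0] by simp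
qed

lemma supp_subset_paulis: "X \<in> paulis n \<Longrightarrow> supp X \<subseteq> {..<n}"
  by (auto simp: paulis_def supp_def) (metis not_le neq0_conv)

lemma finite_supp: "X \<in> paulis n \<Longrightarrow> finite (supp X)"
  using supp_subset_paulis finite_subset by blast

lemma pauli_mult_in_paulis: "X \<in> paulis n \<Longrightarrow> Y \<in> paulis n \<Longrightarrow> pauli_mult X Y \<in> paulis n"
  by (auto simp: paulis_def pauli_mult_def label_mult_less_4)

lemma pauli_mult_commute: "pauli_mult X Y = pauli_mult Y X"
  by (simp add: pauli_mult_def label_mult_commute)

lemma pauli_mult_cancel: "X \<in> paulis n \<Longrightarrow> Y \<in> paulis n \<Longrightarrow> pauli_mult X (pauli_mult X Y) = Y"
  by (simp add: pauli_mult_def fun_eq_iff label_mult_cancel paulis_less_4)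

lemma pauli_mult_cancel_right: "X \<in> paulis n \<Longrightarrow> Y \<in> paulis n \<Longrightarrow> pauli_mult (pauli_mult Y X) X = Y"
  using pauli_mult_cancel pauli_mult_commute by metis

lemma bij_betw_pauli_mult: "X \<in> paulis n \<Longrightarrow> bij_betw (pauli_mult X) (paulis n) (paulis n)"
  by (rule bij_betwI[where g = "pauli_mult X"]) (auto simp: pauli_mult_in_paulis pauli_mult_cancel)

lemma supp_pauli_mult: "supp (pauli_mult X Y) \<subseteq> supp X \<union> supp Y"
  by (auto simp: supp_def pauli_mult_def)

lemma pauli_mat_entry: "r < 2^n \<Longrightarrow> c < 2^n \<Longrightarrow> pauli_mat n X $$ (r, c) = pauli_entry n X r c"
  by (simp add: pauli_mat_def pauli_entry_def)

lemma pauli_entry_mult: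
  assumes "X \<in> paulis n" "Y \<in> paulis n"
  shows "(\<Sum>m<2^n. pauli_entry n X r m * pauli_entry n Y m c)
       = pauli_phase n X Y * pauli_entry n (pauli_mult X Y) r c"
proof -
  have "(\<Sum>m<2^n. pauli_entry n X r m * pauli_entry n Y m c)
      = (\<Prod>i<n. pauli1 (X i) $$ (r div 2^i mod 2, 0) * pauli1 (Y i) $$ (0, c div 2^i mod 2)
               + pauli1 (X i) $$ (r div 2^i mod 2, 1) * pauli1 (Y i) $$ (1, c div 2^i mod 2))"
    unfolding pauli_entry_def prod.distrib[symmetric]
    by (rule sum_prod_binary_digits[where f = "\<lambda>i b. pauli1 (X i) $$ (r div 2^i mod 2, b)
                                                  * pauli1 (Y i) $$ (b, c div 2^i mod 2)"])
  also have "\<dots> = (\<Prod>i<n. label_phase (X i) (Y i)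
                     * pauli1 (label_mult (X i) (Y i)) $$ (r div 2^i mod 2, c div 2^i mod 2))"
    using assms by (intro prod.cong refl pauli1_mult_entry) (simp_all add: paulis_less_4)
  also have "\<dots> = pauli_phase n X Y * pauli_entry n (pauli_mult X Y) r c"
    by (simp add: pauli_phase_def pauli_entry_def pauli_mult_def prod.distrib)
  finally show ?thesis .
qed

lemma pauli_entry_orthogonal:
  assumes "X \<in> paulis n" "Y \<in> paulis n"
  shows "(\<Sum>r<2^n. \<Sum>c<2^n. cnj (pauli_entry n X r c) * pauli_entry n Y r c)
       = (if X = Y then 2^n else 0)"
proof -
  define g where "g i a b = cnj (pauli1 (X i) $$ (a, b)) * pauli1 (Y i) $$ (a, b)" for i a b
  have "(\<Sum>r<2^n. \<Sum>c<2^n. cnj (pauli_entry n X r c) * pauli_entry n Y r c)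
      = (\<Sum>r<2^n. \<Sum>c<2^n. \<Prod>i<n. g i (r div 2^i mod 2) (c div 2^i mod 2))"
    by (simp add: pauli_entry_def g_def prod.distrib)
  also have "\<dots> = (\<Sum>r<2^n. \<Prod>i<n. g i (r div 2^i mod 2) 0 + g i (r div 2^i mod 2) 1)"
    by (intro sum.cong refl sum_prod_binary_digits[where f = "\<lambda>i. g i (_ div 2^i mod 2)"])
  also have "\<dots> = (\<Prod>i<n. (g i 0 0 + g i 0 1) + (g i 1 0 + g i 1 1))"
    by (rule sum_prod_binary_digits)
  also have "\<dots> = (\<Prod>i<n. if X i = Y i then 2 else 0)"
    unfolding g_def using assms by (intro prod.cong refl pauli1_orthogonal paulis_less_4)
  also have "\<dots> = (if X = Y then 2^n else 0)"
  proof (cases "X = Y")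
    case False
    then obtain i where "i < n" "X i \<noteq> Y i"
      using assms by (auto simp: paulis_def fun_eq_iff) (metis not_le)
    then show ?thesis using False by (auto intro: prod_zero)
  qed simp
  finally show ?thesis .
qed

section \<open>Pauli expansions of operators\<close>

lemma op_of_entry:
  "r < 2^n \<Longrightarrow> c < 2^n \<Longrightarrow> op_of n \<xi> $$ (r, c) = (\<Sum>X\<in>paulis n. \<xi> X * pauli_entry n X r c)"
  by (simp add: op_of_def pauli_mat_entry)

lemma dim_op_of [simp]: "dim_row (op_of n \<xi>) = 2^n" "dim_col (op_of n \<xi>) = 2^n"
  by (simp_all add: op_of_def)

lemma inner_pauli_op_of:
  assumes "Z \<in> paulis n"
  shows "(\<Sum>r<2^n. \<Sum>c<2^n. cnj (pauli_entry n Z r c) * op_of n \<xi> $$ (r, c)) = 2^n * \<xi> Z"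
proof -
  have "(\<Sum>r<2^n. \<Sum>c<2^n. cnj (pauli_entry n Z r c) * op_of n \<xi> $$ (r, c))
      = (\<Sum>X\<in>paulis n. \<xi> X * (\<Sum>r<2^n. \<Sum>c<2^n. cnj (pauli_entry n Z r c) * pauli_entry n X r c))"
    by (simp add: op_of_entry sum_distrib_left sum.swap[of _ "paulis n"] algebra_simps)
  also have "\<dots> = (\<Sum>X\<in>paulis n. \<xi> X * (if Z = X then 2^n else 0))"
    using assms by (intro sum.cong refl) (simp add: pauli_entry_orthogonal)
  also have "\<dots> = 2^n * \<xi> Z"
    using assms finite_paulis by (simp add: if_distrib[of "\<lambda>t. _ * t"] sum.delta mult.commute cong: if_cong)
  finally show ?thesis .
qed

lemma pauli_coeff_op_of: "pauli_coeff n (op_of n \<xi>) = (\<lambda>X. if X \<in> paulis n then \<xi> X else 0)"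
  unfolding pauli_coeff_def
proof (rule the_equality)
  show "(\<forall>X. X \<notin> paulis n \<longrightarrow> (if X \<in> paulis n then \<xi> X else 0) = 0)
        \<and> op_of n \<xi> = op_of n (\<lambda>X. if X \<in> paulis n then \<xi> X else 0)"
    by (auto simp: op_of_def intro!: sum.cong)
next
  fix \<eta> assume \<eta>: "(\<forall>X. X \<notin> paulis n \<longrightarrow> \<eta> X = 0) \<and> op_of n \<xi> = op_of n \<eta>"
  show "\<eta> = (\<lambda>X. if X \<in> paulis n then \<xi> X else 0)"
  proof
    fix X show "\<eta> X = (if X \<in> paulis n then \<xi> X else 0)"
      using \<eta> inner_pauli_op_of[of X n \<xi>] inner_pauli_op_of[of X n \<eta>] by auto
  qed
qed

lemma frob_norm_op_of: "frob_norm (op_of n \<xi>) = sqrt (2^n * (\<Sum>X\<in>paulis n. (cmod (\<xi> X))\<^sup>2))"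
proof -
  have sq: "complex_of_real ((cmod z)\<^sup>2) = cnj z * z" for z
    by (metis complex_norm_square mult.commute of_real_power)
  have cnj_entry: "cnj (op_of n \<xi> $$ (r, c)) = (\<Sum>X\<in>paulis n. cnj (\<xi> X) * cnj (pauli_entry n X r c))"
    if "r < 2^n" "c < 2^n" for r c
    using that by (simp add: op_of_entry)
  have "complex_of_real (\<Sum>r<2^n. \<Sum>c<2^n. (cmod (op_of n \<xi> $$ (r, c)))\<^sup>2)
      = (\<Sum>r<2^n. \<Sum>c<2^n. \<Sum>X\<in>paulis n. cnj (\<xi> X) * (cnj (pauli_entry n X r c) * op_of n \<xi> $$ (r, c)))"
    by (simp only: of_real_sum sq) (simp add: cnj_entry sum_distrib_right mult.assoc)
  also have "\<dots> = (\<Sum>X\<in>paulis n. cnj (\<xi> X) * (\<Sum>r<2^n. \<Sum>c<2^n. cnj (pauli_entry n X r c) * op_of n \<xi> $$ (r, c)))"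
    by (simp add: sum_distrib_left sum.swap[of _ "paulis n"])
  also have "\<dots> = (\<Sum>X\<in>paulis n. 2^n * complex_of_real ((cmod (\<xi> X))\<^sup>2))"
    by (simp only: sq) (simp add: inner_pauli_op_of mult_ac)
  also have "\<dots> = complex_of_real (2^n * (\<Sum>X\<in>paulis n. (cmod (\<xi> X))\<^sup>2))"
    by (simp add: sum_distrib_left)
  finally show ?thesis
    unfolding frob_norm_def by (simp only: of_real_eq_iff dim_op_of)
qed

lemma op_of_diff: "op_of n \<xi> - op_of n \<eta> = op_of n (\<lambda>X. \<xi> X - \<eta> X)"
  by (rule eq_matI) (simp_all add: op_of_entry sum_subtractf algebra_simps)

definition pauli_conv ::
    "nat \<Rightarrow> ((nat \<Rightarrow> nat) \<Rightarrow> complex) \<Rightarrow> ((nat \<Rightarrow> nat) \<Rightarrow> complex) \<Rightarrow> (nat \<Rightarrow> nat) \<Rightarrow> complex" where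
  "pauli_conv n \<xi> \<eta> Z = (\<Sum>X\<in>paulis n. pauli_phase n X (pauli_mult X Z) * \<xi> X * \<eta> (pauli_mult X Z))"

lemma op_of_mult: "op_of n \<xi> * op_of n \<eta> = op_of n (pauli_conv n \<xi> \<eta>)"
proof (rule eq_matI)
  fix r c assume "r < dim_row (op_of n (pauli_conv n \<xi> \<eta>))" "c < dim_col (op_of n (pauli_conv n \<xi> \<eta>))"
  then have r: "r < 2^n" and c: "c < 2^n" by auto
  have "(op_of n \<xi> * op_of n \<eta>) $$ (r, c)
      = (\<Sum>m<2^n. \<Sum>X\<in>paulis n. \<Sum>Y\<in>paulis n. \<xi> X * \<eta> Y * (pauli_entry n X r m * pauli_entry n Y m c))"
    using r c by (simp add: scalar_prod_def lessThan_atLeast0 op_of_entry sum_distrib_left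
        sum_distrib_right algebra_simps)
  also have "\<dots> = (\<Sum>X\<in>paulis n. \<Sum>Y\<in>paulis n. \<xi> X * \<eta> Y * (\<Sum>m<2^n. pauli_entry n X r m * pauli_entry n Y m c))"
    by (simp add: sum_distrib_left sum.swap[of _ "{..<2^n}"])
  also have "\<dots> = (\<Sum>X\<in>paulis n. \<Sum>Y\<in>paulis n.
                    pauli_phase n X Y * \<xi> X * \<eta> Y * pauli_entry n (pauli_mult X Y) r c)"
    by (intro sum.cong refl) (simp add: pauli_entry_mult)
  also have "\<dots> = (\<Sum>X\<in>paulis n. \<Sum>Z\<in>paulis n.
                    pauli_phase n X (pauli_mult X Z) * \<xi> X * \<eta> (pauli_mult X Z) * pauli_entry n Z r c)"
  proof (rule sum.cong[OF refl])
    fix X assume X: "X \<in> paulis n"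
    show "(\<Sum>Y\<in>paulis n. pauli_phase n X Y * \<xi> X * \<eta> Y * pauli_entry n (pauli_mult X Y) r c)
        = (\<Sum>Z\<in>paulis n. pauli_phase n X (pauli_mult X Z) * \<xi> X * \<eta> (pauli_mult X Z) * pauli_entry n Z r c)"
      using sum.reindex_bij_betw[OF bij_betw_pauli_mult[OF X], symmetric,
          of "\<lambda>Y. pauli_phase n X Y * \<xi> X * \<eta> Y * pauli_entry n (pauli_mult X Y) r c"] X
      by (simp add: pauli_mult_cancel cong: sum.cong)
  qed
  also have "\<dots> = (\<Sum>Z\<in>paulis n. pauli_conv n \<xi> \<eta> Z * pauli_entry n Z r c)"
    unfolding pauli_conv_def sum_distrib_right by (rule sum.swap)
  also have "\<dots> = op_of n (pauli_conv n \<xi> \<eta>) $$ (r, c)"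
    using r c by (simp add: op_of_entry)
  finally show "(op_of n \<xi> * op_of n \<eta>) $$ (r, c) = op_of n (pauli_conv n \<xi> \<eta>) $$ (r, c)" .
qed simp_all

lemma frob_norm_op_of_le:
  assumes "0 \<le> b" "(\<Sum>X\<in>paulis n. (cmod (\<xi> X))\<^sup>2) \<le> b\<^sup>2 * (\<Sum>X\<in>paulis n. (cmod (\<eta> X))\<^sup>2)"
  shows "frob_norm (op_of n \<xi>) \<le> b * frob_norm (op_of n \<eta>)"
proof -
  have "frob_norm (op_of n \<xi>) \<le> sqrt (b\<^sup>2 * (2^n * (\<Sum>X\<in>paulis n. (cmod (\<eta> X))\<^sup>2)))"
    unfolding frob_norm_op_of using assms(2) by (simp add: mult.left_commute)
  also have "\<dots> = b * frob_norm (op_of n \<eta>)"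
    unfolding frob_norm_op_of real_sqrt_mult using assms(1) by simp
  finally show ?thesis .
qed

lemma loc2_norm_nonneg: "0 \<le> loc2_norm n A"
  unfolding loc2_norm_def by (rule Max_ge) auto

lemma site_mass_le_loc2_norm:
  "(\<Sum>X\<in>{X\<in>paulis n. j \<in> supp X}. (cmod (pauli_coeff n A X))\<^sup>2) \<le> (loc2_norm n A)\<^sup>2"
proof (cases "j < n")
  case True
  then have "sqrt (\<Sum>X\<in>{X\<in>paulis n. j \<in> supp X}. (cmod (pauli_coeff n A X))\<^sup>2) \<le> loc2_norm n A"
    unfolding loc2_norm_def by (intro Max_ge) auto
  then show ?thesis by (metis sqrt_le_D)
next
  case False
  then have "{X\<in>paulis n. j \<in> supp X} = {}" using supp_subset_paulis by fastforce
  then have "(\<Sum>X\<in>{X\<in>paulis n. j \<in> supp X}. (cmod (pauli_coeff n A X))\<^sup>2) = 0"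
    by (simp only: sum.empty)
  then show ?thesis by simp
qed

lemma loc2_norm_le:
  assumes "0 \<le> b"
    and "\<And>i. i < n \<Longrightarrow> (\<Sum>X\<in>{X\<in>paulis n. i \<in> supp X}. (cmod (pauli_coeff n A X))\<^sup>2) \<le> b\<^sup>2"
  shows "loc2_norm n A \<le> b"
  unfolding loc2_norm_def using assms by (intro Max.boundedI) (auto intro: real_le_lsqrt)

section \<open>Coefficients of a commutator\<close>

text \<open>Pauli strings commute unless this holds, so only such pairs contribute to a commutator.\<close>

definition anticommute_at_some_site :: "(nat \<Rightarrow> nat) \<Rightarrow> (nat \<Rightarrow> nat) \<Rightarrow> bool" where
  "anticommute_at_some_site X Y \<longleftrightarrow> (\<exists>i. X i \<noteq> 0 \<and> Y i \<noteq> 0 \<and> X i \<noteq> Y i)"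

lemma pauli_phase_commute:
  "\<not> anticommute_at_some_site X Y \<Longrightarrow> pauli_phase n X Y = pauli_phase n Y X"
  unfolding pauli_phase_def anticommute_at_some_site_def
  by (intro prod.cong refl label_phase_commute) blast

lemma norm_pauli_phase [simp]: "cmod (pauli_phase n X Y) = 1"
  by (simp add: pauli_phase_def prod_norm[symmetric])

definition comm_weight ::
    "nat \<Rightarrow> ((nat \<Rightarrow> nat) \<Rightarrow> real) \<Rightarrow> ((nat \<Rightarrow> nat) \<Rightarrow> real) \<Rightarrow> (nat \<Rightarrow> nat) \<Rightarrow> real" where
  "comm_weight n lam mu Z = (\<Sum>X\<in>{X\<in>paulis n. anticommute_at_some_site X (pauli_mult X Z)}.
     \<bar>lam X\<bar> * \<bar>mu (pauli_mult X Z)\<bar>)"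

lemma pauli_conv_commutator_le:
  fixes lam mu :: "(nat \<Rightarrow> nat) \<Rightarrow> real"
  defines "x \<equiv> \<lambda>X. complex_of_real (lam X)" and "y \<equiv> \<lambda>X. complex_of_real (mu X)"
  assumes Z: "Z \<in> paulis n"
  shows "cmod (pauli_conv n x y Z - pauli_conv n y x Z) \<le> 2 * comm_weight n lam mu Z"
proof -
  let ?XZ = "\<lambda>X. pauli_mult X Z"
  have "pauli_conv n y x Z = (\<Sum>X\<in>paulis n. pauli_phase n (pauli_mult Z X) (?XZ (pauli_mult Z X))
                                * y (pauli_mult Z X) * x (?XZ (pauli_mult Z X)))"
    unfolding pauli_conv_def by (rule sum.reindex_bij_betw[OF bij_betw_pauli_mult[OF Z], symmetric])
  also have "\<dots> = (\<Sum>X\<in>paulis n. pauli_phase n (?XZ X) X * x X * y (?XZ X))"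
    using Z by (intro sum.cong refl) (simp add: pauli_mult_commute[of Z] pauli_mult_cancel_right)
  finally have "pauli_conv n y x Z = (\<Sum>X\<in>paulis n. pauli_phase n (?XZ X) X * x X * y (?XZ X))" .
  then have diff: "pauli_conv n x y Z - pauli_conv n y x Z
      = (\<Sum>X\<in>paulis n. (pauli_phase n X (?XZ X) - pauli_phase n (?XZ X) X) * x X * y (?XZ X))"
    by (simp add: pauli_conv_def sum_subtractf algebra_simps)
  have "cmod (\<Sum>X\<in>paulis n. (pauli_phase n X (?XZ X) - pauli_phase n (?XZ X) X) * x X * y (?XZ X))
      \<le> (\<Sum>X\<in>paulis n. 2 * (if anticommute_at_some_site X (?XZ X)
                                            then \<bar>lam X\<bar> * \<bar>mu (?XZ X)\<bar> else 0))"
  proof (rule order_trans[OF norm_sum sum_mono])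
    fix X
    have "cmod (pauli_phase n X (?XZ X) - pauli_phase n (?XZ X) X) \<le> 2"
      using norm_triangle_ineq4[of "pauli_phase n X (?XZ X)" "pauli_phase n (?XZ X) X"] by simp
    then show "cmod ((pauli_phase n X (?XZ X) - pauli_phase n (?XZ X) X) * x X * y (?XZ X))
        \<le> 2 * (if anticommute_at_some_site X (?XZ X) then \<bar>lam X\<bar> * \<bar>mu (?XZ X)\<bar> else 0)"
      using pauli_phase_commute[of X "?XZ X" n]
      by (cases "anticommute_at_some_site X (?XZ X)")
        (simp_all add: x_def y_def norm_mult mult.assoc mult_right_mono)
  qed
  also have "\<dots> = 2 * comm_weight n lam mu Z"
    by (simp only: comm_weight_def sum.inter_filter[OF finite_paulis] sum_distrib_left)
  finally show ?thesis unfolding diff .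
qed

section \<open>Counting\<close>

lemma card_subsets_card_le:
  assumes U: "finite U"
  shows "card {T. T \<subseteq> U \<and> card T \<le> k} \<le> (card U + 1)^k"
proof -
  let ?L = "{xs. set xs \<subseteq> insert None (Some ` U) \<and> length xs = k}"
  have "{T. T \<subseteq> U \<and> card T \<le> k} \<subseteq> (\<lambda>xs. Some -` set xs) ` ?L"
  proof
    fix T assume "T \<in> {T. T \<subseteq> U \<and> card T \<le> k}"
    then have TU: "T \<subseteq> U" and Tk: "card T \<le> k" by auto
    obtain ys where ys: "set ys = T" "distinct ys"
      using TU U finite_distinct_list finite_subset by metis
    then have "length ys = card T" using distinct_card by fastforce
    then have "map Some ys @ replicate (k - card T) None \<in> ?L" using TU Tk ys by auto
    moreover have "Some -` set (map Some ys @ replicate (k - card T) None) = T" using ys by auto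
    ultimately show "T \<in> (\<lambda>xs. Some -` set xs) ` ?L" by blast
  qed
  moreover have "finite ?L" using U by (intro finite_lists_length_eq) auto
  ultimately have "card {T. T \<subseteq> U \<and> card T \<le> k} \<le> card ?L"
    by (meson card_image_le card_mono finite_imageI order_trans)
  also have "\<dots> = (card U + 1)^k"
    using U by (subst card_lists_length_eq) (auto simp: card_image)
  finally show ?thesis .
qed

lemma sum_overlapping_le:
  fixes f :: "'a \<Rightarrow> real"
  assumes I: "finite I" and T: "finite T" and f: "\<And>x. x \<in> I \<Longrightarrow> 0 \<le> f x"
  shows "(\<Sum>x\<in>{x\<in>I. S x \<inter> T \<noteq> {}}. f x) \<le> (\<Sum>j\<in>T. \<Sum>x\<in>{x\<in>I. j \<in> S x}. f x)"
proof -
  have "(\<Sum>x\<in>{x\<in>I. S x \<inter> T \<noteq> {}}. f x) \<le> (\<Sum>x\<in>I. \<Sum>j\<in>{j\<in>T. j \<in> S x}. f x)"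
    unfolding sum.inter_filter[OF I]
  proof (rule sum_mono)
    fix x assume x: "x \<in> I"
    show "(if S x \<inter> T \<noteq> {} then f x else 0) \<le> (\<Sum>j\<in>{j\<in>T. j \<in> S x}. f x)"
    proof (cases "S x \<inter> T = {}")
      case False
      then have "{j\<in>T. j \<in> S x} \<noteq> {}" by blast
      then have "1 \<le> real (card {j\<in>T. j \<in> S x})" using T by (simp add: Suc_le_eq card_gt_0_iff)
      from mult_right_mono[OF this f[OF x]] False show ?thesis by simp
    qed (simp add: f x sum_nonneg)
  qed
  also have "\<dots> = (\<Sum>j\<in>T. \<Sum>x\<in>{x\<in>I. j \<in> S x}. f x)"
    by (rule sum.swap_restrict[OF I T])
  finally show ?thesis .
qed

lemma double_counting_le:
  fixes w :: "'b \<Rightarrow> real" and N :: real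
  assumes "finite A" "finite B" "\<And>x. x \<in> B \<Longrightarrow> 0 \<le> w x"
    and "\<And>x. x \<in> B \<Longrightarrow> w x \<noteq> 0 \<Longrightarrow> card {a\<in>A. R a x} \<le> N"
  shows "(\<Sum>a\<in>A. \<Sum>x\<in>{x\<in>B. R a x}. w x) \<le> N * (\<Sum>x\<in>B. w x)"
proof -
  have "(\<Sum>a\<in>A. \<Sum>x\<in>{x\<in>B. R a x}. w x) = (\<Sum>x\<in>B. \<Sum>a\<in>{a\<in>A. R a x}. w x)"
    by (rule sum.swap_restrict[OF assms(1,2)])
  also have "\<dots> = (\<Sum>x\<in>B. card {a\<in>A. R a x} * w x)"
    by simp
  also have "\<dots> \<le> (\<Sum>x\<in>B. N * w x)"
    using assms(3,4) by (intro sum_mono) (metis mult_right_mono mult_zero_right of_nat_le_iff order_refl)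
  finally show ?thesis by (simp add: sum_distrib_left)
qed

lemma sum_le_sum_Un:
  fixes f :: "'a \<Rightarrow> real"
  assumes "finite A" "finite B" "S \<subseteq> A \<union> B" "\<And>x. x \<in> A \<union> B \<Longrightarrow> 0 \<le> f x"
  shows "sum f S \<le> sum f A + sum f B"
proof -
  have "sum f S \<le> sum f (A \<union> B)"
    using assms by (intro sum_mono2) auto
  also have "\<dots> = sum f A + sum f B - sum f (A \<inter> B)"
    using assms by (simp add: sum_Un)
  also have "\<dots> \<le> sum f A + sum f B"
    using assms(4) sum_nonneg[of "A \<inter> B" f] by auto
  finally show ?thesis .
qed

lemma counting_constant_le:
  assumes "1 \<le> k"
  shows "real ((3 * (k + k') + 1) ^ k * ((k + k') * 2 ^ k * (k' + 1) ^ k)) \<le> (4 * (real k' + real k)) ^ (3 * k)"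
proof -
  let ?s = "4 * (k' + k)"
  have "(3 * (k + k') + 1) ^ k \<le> ?s ^ k"
    using assms by (intro power_mono) auto
  moreover have "k + k' \<le> ?s ^ k"
  proof -
    have "k + k' \<le> ?s ^ 1" by simp
    also have "\<dots> \<le> ?s ^ k" using assms by (intro power_increasing) auto
    finally show ?thesis .
  qed
  moreover have "2 ^ k * (k' + 1) ^ k \<le> ?s ^ k"
    unfolding power_mult_distrib[symmetric] using assms by (intro power_mono) auto
  ultimately have "(3 * (k + k') + 1) ^ k * ((k + k') * 2 ^ k * (k' + 1) ^ k) \<le> ?s ^ k * (?s ^ k * ?s ^ k)"
    by (metis mult.assoc mult_le_mono)
  also have "\<dots> = ?s ^ (k + (k + k))"
    by (simp only: power_add)
  also have "\<dots> = ?s ^ (3 * k)"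
    by (rule arg_cong[where f = "power ?s"]) simp
  finally have "real ((3 * (k + k') + 1) ^ k * ((k + k') * 2 ^ k * (k' + 1) ^ k)) \<le> real (?s ^ (3 * k))"
    by (simp only: of_nat_le_iff)
  then show ?thesis by simp
qed

section \<open>Restrictions of Pauli strings\<close>

definition pauli_restrict :: "(nat \<Rightarrow> nat) \<Rightarrow> nat set \<Rightarrow> nat \<Rightarrow> nat" where
  "pauli_restrict X S = (\<lambda>i. if i \<in> S then X i else 0)"

definition subpauli :: "(nat \<Rightarrow> nat) \<Rightarrow> (nat \<Rightarrow> nat) \<Rightarrow> bool" where
  "subpauli r X \<longleftrightarrow> (\<forall>i\<in>supp r. X i = r i)"

lemma supp_pauli_restrict [simp]: "supp (pauli_restrict X S) = supp X \<inter> S"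
  by (auto simp: supp_def pauli_restrict_def)

lemma pauli_restrict_in_paulis: "X \<in> paulis n \<Longrightarrow> pauli_restrict X S \<in> paulis n"
  by (simp add: pauli_restrict_def paulis_def)

lemma subpauli_pauli_restrict: "subpauli (pauli_restrict X S) X"
  by (simp add: subpauli_def pauli_restrict_def supp_def)

lemma subpauli_supp: "subpauli r X \<Longrightarrow> supp r \<subseteq> supp X"
  by (auto simp: subpauli_def supp_def)

lemma subpauli_iff: "subpauli r X \<longleftrightarrow> r = pauli_restrict X (supp r)"
  by (auto simp: subpauli_def pauli_restrict_def supp_def fun_eq_iff)

lemma pauli_mult_restrict:
  "supp Z \<subseteq> S \<Longrightarrow> pauli_mult (pauli_restrict X S) Z = pauli_restrict (pauli_mult X Z) S"
  by (force simp: pauli_mult_def pauli_restrict_def supp_def fun_eq_iff)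

lemma subpaulis_eq: "{r. subpauli r X} = pauli_restrict X ` Pow (supp X)"
proof
  show "{r. subpauli r X} \<subseteq> pauli_restrict X ` Pow (supp X)"
    using subpauli_iff subpauli_supp by blast
  show "pauli_restrict X ` Pow (supp X) \<subseteq> {r. subpauli r X}"
    using subpauli_pauli_restrict by blast
qed

lemma finite_subpaulis: "finite (supp X) \<Longrightarrow> finite {r. subpauli r X}"
  unfolding subpaulis_eq by simp

lemma card_subpaulis_le: "finite (supp X) \<Longrightarrow> card {r. subpauli r X} \<le> 2 ^ card (supp X)"
  unfolding subpaulis_eq by (metis card_Pow card_image_le finite_Pow_iff)

lemma card_subpaulis_missing_le:
  assumes "finite (supp Y)"
  shows "card {q. subpauli q Y \<and> card (supp Y - supp q) \<le> k} \<le> (card (supp Y) + 1)^k"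
proof -
  have "{q. subpauli q Y \<and> card (supp Y - supp q) \<le> k}
      \<subseteq> (\<lambda>T. pauli_restrict Y (supp Y - T)) ` {T. T \<subseteq> supp Y \<and> card T \<le> k}"
  proof
    fix q assume q: "q \<in> {q. subpauli q Y \<and> card (supp Y - supp q) \<le> k}"
    then have "supp Y - (supp Y - supp q) = supp q" using subpauli_supp by blast
    then show "q \<in> (\<lambda>T. pauli_restrict Y (supp Y - T)) ` {T. T \<subseteq> supp Y \<and> card T \<le> k}"
      using q subpauli_iff by (intro image_eqI[where x = "supp Y - supp q"]) auto
  qed
  then have "card {q. subpauli q Y \<and> card (supp Y - supp q) \<le> k}
      \<le> card ((\<lambda>T. pauli_restrict Y (supp Y - T)) ` {T. T \<subseteq> supp Y \<and> card T \<le> k})"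
    using assms by (intro card_mono) auto
  also have "\<dots> \<le> card {T. T \<subseteq> supp Y \<and> card T \<le> k}"
    by (rule card_image_le) (use assms in auto)
  also have "\<dots> \<le> (card (supp Y) + 1)^k"
    by (rule card_subsets_card_le[OF assms])
  finally show ?thesis .
qed

lemma inj_pauli_graph: "inj (\<lambda>r :: nat \<Rightarrow> nat. (\<lambda>i. (i, r i)) ` supp r)"
proof (rule injI)
  have agree: "r i = s i" if graph: "(\<lambda>i. (i, r i)) ` supp r = (\<lambda>i. (i, s i)) ` supp s"
    and "r i \<noteq> 0" for r s :: "nat \<Rightarrow> nat" and i
  proof -
    have "(i, r i) \<in> (\<lambda>i. (i, r i)) ` supp r"
      using \<open>r i \<noteq> 0\<close> by (simp add: supp_def)
    then have "(i, r i) \<in> (\<lambda>i. (i, s i)) ` supp s"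
      by (simp only: graph)
    then show ?thesis by auto
  qed
  fix r s :: "nat \<Rightarrow> nat" assume "(\<lambda>i. (i, r i)) ` supp r = (\<lambda>i. (i, s i)) ` supp s"
  then show "r = s"
    using agree[of r s] agree[of s r] by (metis ext)
qed

section \<open>Commutators of local Pauli expansions\<close>

lemma site_bound_nonneg:
  fixes f :: "(nat \<Rightarrow> nat) \<Rightarrow> real"
  assumes "\<And>j. (\<Sum>X\<in>{X\<in>paulis n. j \<in> supp X}. (f X)\<^sup>2) \<le> h"
  shows "0 \<le> h"
  using assms[of 0] by (meson order_trans sum_nonneg zero_le_power2)

locale local_pauli_coeffs =
  fixes n k k' :: nat and lam mu :: "(nat \<Rightarrow> nat) \<Rightarrow> real"
  assumes lam_local: "lam X \<noteq> 0 \<Longrightarrow> X \<in> paulis n \<and> card (supp X) \<le> k"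
    and mu_local: "mu Y \<noteq> 0 \<Longrightarrow> Y \<in> paulis n \<and> card (supp Y) \<le> k'"
begin

definition lam_mass :: "(nat \<Rightarrow> nat) \<Rightarrow> real" where
  "lam_mass r = (\<Sum>X\<in>{X\<in>paulis n. subpauli r X}. (lam X)\<^sup>2)"

text \<open>Allowing only \<open>k\<close> sites outside \<open>q\<close> bounds the number of \<open>q\<close> counted for each \<open>Y\<close>
  by \<open>(k' + 1)^k\<close> instead of \<open>2^k'\<close>.\<close>

definition mu_mass :: "(nat \<Rightarrow> nat) \<Rightarrow> real" where
  "mu_mass q = (\<Sum>Y\<in>{Y\<in>paulis n. subpauli q Y \<and> card (supp Y - supp q) \<le> k}. (mu Y)\<^sup>2)"

lemma lam_mass_nonneg: "0 \<le> lam_mass r"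
  unfolding lam_mass_def by (simp add: sum_nonneg)

lemma mu_mass_nonneg: "0 \<le> mu_mass q"
  unfolding mu_mass_def by (simp add: sum_nonneg)

lemma lam_mass_nonzero:
  assumes "lam_mass r \<noteq> 0"
  shows "finite (supp r) \<and> card (supp r) \<le> k"
proof -
  obtain X where "subpauli r X" "lam X \<noteq> 0"
    using sum.not_neutral_contains_not_neutral[OF assms[unfolded lam_mass_def]] by auto
  then have "supp r \<subseteq> supp X" "finite (supp X)" "card (supp X) \<le> k"
    using subpauli_supp lam_local finite_supp by blast+
  then show ?thesis by (meson card_mono finite_subset le_trans)
qed

lemma mu_mass_nonzero:
  assumes "mu_mass q \<noteq> 0"
  shows "finite (supp q) \<and> card (supp q) \<le> k'"
proof -
  obtain Y where "subpauli q Y" "mu Y \<noteq> 0"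
    using sum.not_neutral_contains_not_neutral[OF assms[unfolded mu_mass_def]] by auto
  then have "supp q \<subseteq> supp Y" "finite (supp Y)" "card (supp Y) \<le> k'"
    using subpauli_supp mu_local finite_supp by blast+
  then show ?thesis by (meson card_mono finite_subset le_trans)
qed

lemma sum_lam_mass_le:
  "(\<Sum>r\<in>{r\<in>paulis n. S \<subseteq> supp r}. lam_mass r) \<le> 2^k * (\<Sum>X\<in>{X\<in>paulis n. S \<subseteq> supp X}. (lam X)\<^sup>2)"
proof -
  have "(\<Sum>r\<in>{r\<in>paulis n. S \<subseteq> supp r}. lam_mass r)
      = (\<Sum>r\<in>{r\<in>paulis n. S \<subseteq> supp r}. \<Sum>X\<in>{X\<in>{X\<in>paulis n. S \<subseteq> supp X}. subpauli r X}. (lam X)\<^sup>2)"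
    unfolding lam_mass_def using subpauli_supp by (intro sum.cong refl arg_cong[where f = "sum _"]) blast
  also have "\<dots> \<le> 2^k * (\<Sum>X\<in>{X\<in>paulis n. S \<subseteq> supp X}. (lam X)\<^sup>2)"
  proof (rule double_counting_le)
    fix X assume "X \<in> {X\<in>paulis n. S \<subseteq> supp X}" "(lam X)\<^sup>2 \<noteq> 0"
    then have X: "finite (supp X)" "card (supp X) \<le> k" using lam_local finite_supp by auto
    have "card {r\<in>{r\<in>paulis n. S \<subseteq> supp r}. subpauli r X} \<le> card {r. subpauli r X}"
      using finite_subpaulis[OF X(1)] by (intro card_mono) auto
    also have "\<dots> \<le> 2 ^ card (supp X)" by (rule card_subpaulis_le[OF X(1)])
    also have "\<dots> \<le> 2 ^ k" using X(2) by (simp add: power_increasing)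
    finally have "real (card {r\<in>{r\<in>paulis n. S \<subseteq> supp r}. subpauli r X}) \<le> real (2 ^ k)"
      by (simp only: of_nat_le_iff)
    then show "real (card {r\<in>{r\<in>paulis n. S \<subseteq> supp r}. subpauli r X}) \<le> 2 ^ k"
      by simp
  qed (simp_all add: finite_paulis)
  finally show ?thesis .
qed

lemma sum_mu_mass_le:
  "(\<Sum>q\<in>{q\<in>paulis n. S \<subseteq> supp q}. mu_mass q)
     \<le> real ((k' + 1)^k) * (\<Sum>Y\<in>{Y\<in>paulis n. S \<subseteq> supp Y}. (mu Y)\<^sup>2)"
proof -
  have "(\<Sum>q\<in>{q\<in>paulis n. S \<subseteq> supp q}. mu_mass q)
      = (\<Sum>q\<in>{q\<in>paulis n. S \<subseteq> supp q}. \<Sum>Y\<in>{Y\<in>{Y\<in>paulis n. S \<subseteq> supp Y}.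
           subpauli q Y \<and> card (supp Y - supp q) \<le> k}. (mu Y)\<^sup>2)"
    unfolding mu_mass_def using subpauli_supp by (intro sum.cong refl arg_cong[where f = "sum _"]) blast
  also have "\<dots> \<le> real ((k' + 1)^k) * (\<Sum>Y\<in>{Y\<in>paulis n. S \<subseteq> supp Y}. (mu Y)\<^sup>2)"
  proof (rule double_counting_le)
    fix Y assume "Y \<in> {Y\<in>paulis n. S \<subseteq> supp Y}" "(mu Y)\<^sup>2 \<noteq> 0"
    then have Y: "finite (supp Y)" "card (supp Y) \<le> k'" using mu_local finite_supp by auto
    have "card {q\<in>{q\<in>paulis n. S \<subseteq> supp q}. subpauli q Y \<and> card (supp Y - supp q) \<le> k}
        \<le> card {q. subpauli q Y \<and> card (supp Y - supp q) \<le> k}"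
      using finite_subpaulis[OF Y(1)] by (intro card_mono) (auto elim: finite_subset[rotated])
    also have "\<dots> \<le> (card (supp Y) + 1)^k" by (rule card_subpaulis_missing_le[OF Y(1)])
    also have "\<dots> \<le> (k' + 1)^k" using Y(2) by (simp add: power_mono)
    finally show "real (card {q\<in>{q\<in>paulis n. S \<subseteq> supp q}. subpauli q Y \<and> card (supp Y - supp q) \<le> k})
        \<le> real ((k' + 1)^k)"
      by (simp only: of_nat_le_iff)
  qed (simp_all add: finite_paulis)
  finally show ?thesis .
qed

lemma sum_lam_mass_site_le:
  fixes h :: real
  assumes lam_site: "\<And>j. (\<Sum>X\<in>{X\<in>paulis n. j \<in> supp X}. (lam X)\<^sup>2) \<le> h"
  shows "(\<Sum>r\<in>{r\<in>paulis n. j \<in> supp r}. lam_mass r) \<le> 2^k * h"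
proof -
  have "(\<Sum>r\<in>{r\<in>paulis n. j \<in> supp r}. lam_mass r) \<le> 2^k * (\<Sum>X\<in>{X\<in>paulis n. j \<in> supp X}. (lam X)\<^sup>2)"
    using sum_lam_mass_le[of "{j}"] by simp
  also have "\<dots> \<le> 2^k * h" using lam_site by (simp add: mult_left_mono)
  finally show ?thesis .
qed

lemma sum_mu_mass_site_le:
  fixes g :: real
  assumes mu_site: "\<And>j. (\<Sum>Y\<in>{Y\<in>paulis n. j \<in> supp Y}. (mu Y)\<^sup>2) \<le> g"
  shows "(\<Sum>q\<in>{q\<in>paulis n. j \<in> supp q}. mu_mass q) \<le> real ((k' + 1)^k) * g"
proof -
  have "(\<Sum>q\<in>{q\<in>paulis n. j \<in> supp q}. mu_mass q)
      \<le> real ((k' + 1)^k) * (\<Sum>Y\<in>{Y\<in>paulis n. j \<in> supp Y}. (mu Y)\<^sup>2)"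
    using sum_mu_mass_le[of "{j}"] by simp
  also have "\<dots> \<le> real ((k' + 1)^k) * g" using mu_site by (intro mult_left_mono) auto
  finally show ?thesis .
qed

lemma sum_lam_mass_overlapping_le:
  fixes h :: real
  assumes lam_site: "\<And>j. (\<Sum>X\<in>{X\<in>paulis n. j \<in> supp X}. (lam X)\<^sup>2) \<le> h" and T: "finite T"
  shows "(\<Sum>r\<in>{r\<in>paulis n. supp r \<inter> T \<noteq> {}}. lam_mass r) \<le> card T * (2^k * h)"
proof -
  have "(\<Sum>r\<in>{r\<in>paulis n. supp r \<inter> T \<noteq> {}}. lam_mass r) \<le> (\<Sum>j\<in>T. \<Sum>r\<in>{r\<in>paulis n. j \<in> supp r}. lam_mass r)"
    by (rule sum_overlapping_le) (simp_all add: finite_paulis T lam_mass_nonneg)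
  also have "\<dots> \<le> (\<Sum>j\<in>T. 2^k * h)"
    by (intro sum_mono sum_lam_mass_site_le[OF lam_site])
  finally show ?thesis by simp
qed

lemma sum_mu_mass_overlapping_le:
  fixes g :: real
  assumes mu_site: "\<And>j. (\<Sum>Y\<in>{Y\<in>paulis n. j \<in> supp Y}. (mu Y)\<^sup>2) \<le> g" and T: "finite T"
  shows "(\<Sum>q\<in>{q\<in>paulis n. supp q \<inter> T \<noteq> {}}. mu_mass q) \<le> card T * (real ((k' + 1)^k) * g)"
proof -
  have "(\<Sum>q\<in>{q\<in>paulis n. supp q \<inter> T \<noteq> {}}. mu_mass q) \<le> (\<Sum>j\<in>T. \<Sum>q\<in>{q\<in>paulis n. j \<in> supp q}. mu_mass q)"
    by (rule sum_overlapping_le) (simp_all add: finite_paulis T mu_mass_nonneg)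
  also have "\<dots> \<le> (\<Sum>j\<in>T. real ((k' + 1)^k) * g)"
    by (intro sum_mono sum_mu_mass_site_le[OF mu_site])
  finally show ?thesis by simp
qed

definition contributors :: "(nat \<Rightarrow> nat) \<Rightarrow> (nat \<Rightarrow> nat) set" where
  "contributors Z = {X\<in>paulis n. lam X \<noteq> 0 \<and> mu (pauli_mult X Z) \<noteq> 0
                                \<and> anticommute_at_some_site X (pauli_mult X Z)}"

definition restrictions :: "(nat \<Rightarrow> nat) \<Rightarrow> (nat \<Rightarrow> nat) set" where
  "restrictions Z = (\<lambda>X. pauli_restrict X (supp Z)) ` contributors Z"

lemma finite_contributors: "finite (contributors Z)"
  unfolding contributors_def using finite_paulis by simp

lemma comm_weight_eq: "comm_weight n lam mu Z = (\<Sum>X\<in>contributors Z. \<bar>lam X\<bar> * \<bar>mu (pauli_mult X Z)\<bar>)"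
  unfolding comm_weight_def contributors_def
  by (rule sum.mono_neutral_right) (auto simp: finite_paulis)

lemma contributor_restriction:
  assumes X: "X \<in> contributors Z" and Z: "Z \<in> paulis n"
  defines "r \<equiv> pauli_restrict X (supp Z)"
  shows "r \<in> paulis n" and "subpauli r X" and "pauli_mult r Z \<in> paulis n"
    and "pauli_mult r (pauli_mult r Z) = Z"
    and "subpauli (pauli_mult r Z) (pauli_mult X Z)"
    and "card (supp (pauli_mult X Z) - supp (pauli_mult r Z)) \<le> k"
    and "supp r \<inter> supp (pauli_mult r Z) \<noteq> {}"
proof -
  have XP: "X \<in> paulis n" and lamX: "lam X \<noteq> 0"
    and anti: "anticommute_at_some_site X (pauli_mult X Z)"
    using X by (auto simp: contributors_def)
  show rP: "r \<in> paulis n" unfolding r_def using XP by (rule pauli_restrict_in_paulis)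
  show "subpauli r X" unfolding r_def by (rule subpauli_pauli_restrict)
  show "pauli_mult r Z \<in> paulis n" using rP Z by (rule pauli_mult_in_paulis)
  show "pauli_mult r (pauli_mult r Z) = Z" using rP Z by (rule pauli_mult_cancel)
  have q: "pauli_mult r Z = pauli_restrict (pauli_mult X Z) (supp Z)"
    unfolding r_def by (rule pauli_mult_restrict) simp
  show "subpauli (pauli_mult r Z) (pauli_mult X Z)"
    unfolding q by (rule subpauli_pauli_restrict)
  have "supp (pauli_mult X Z) - supp (pauli_mult r Z) \<subseteq> supp X"
    unfolding q using supp_pauli_mult[of X Z] by auto
  then show "card (supp (pauli_mult X Z) - supp (pauli_mult r Z)) \<le> k"
    using lam_local[OF lamX] finite_supp[OF XP] by (meson card_mono le_trans)
  obtain i where i: "X i \<noteq> 0" "pauli_mult X Z i \<noteq> 0" "X i \<noteq> pauli_mult X Z i"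
    using anti by (auto simp: anticommute_at_some_site_def)
  have "Z i \<noteq> 0"
  proof
    assume "Z i = 0"
    then have "pauli_mult X Z i = X i" by (simp add: pauli_mult_def)
    with i(3) show False by simp
  qed
  then have "i \<in> supp r" and "i \<in> supp (pauli_mult r Z)"
    using i(1,2) unfolding q by (simp_all add: r_def pauli_restrict_def supp_def)
  then show "supp r \<inter> supp (pauli_mult r Z) \<noteq> {}" by blast
qed

lemma comm_weight_sq_le:
  assumes Z: "Z \<in> paulis n"
  shows "(comm_weight n lam mu Z)\<^sup>2
    \<le> card (restrictions Z) * (\<Sum>r\<in>restrictions Z. lam_mass r * mu_mass (pauli_mult r Z))"
proof -
  define W where "W r = {X \<in> contributors Z. pauli_restrict X (supp Z) = r}" for r
  have "comm_weight n lam mu Z = (\<Sum>r\<in>restrictions Z. \<Sum>X\<in>W r. \<bar>lam X\<bar> * \<bar>mu (pauli_mult X Z)\<bar>)"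
    unfolding comm_weight_eq restrictions_def W_def by (rule sum.image_gen[OF finite_contributors])
  then have "(comm_weight n lam mu Z)\<^sup>2
      \<le> (\<Sum>r\<in>restrictions Z. (\<Sum>X\<in>W r. \<bar>lam X\<bar> * \<bar>mu (pauli_mult X Z)\<bar>)\<^sup>2) * card (restrictions Z)"
    by (simp only: sum_squared_le_sum_of_squares)
  also have "\<dots> \<le> (\<Sum>r\<in>restrictions Z. lam_mass r * mu_mass (pauli_mult r Z)) * card (restrictions Z)"
  proof (intro mult_right_mono sum_mono)
    fix r
    have W: "X \<in> paulis n" "subpauli r X" "pauli_mult X Z \<in> paulis n"
      "subpauli (pauli_mult r Z) (pauli_mult X Z)"
      "card (supp (pauli_mult X Z) - supp (pauli_mult r Z)) \<le> k" if "X \<in> W r" for X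
      using that contributor_restriction[OF _ Z] pauli_mult_in_paulis[OF _ Z]
      by (auto simp: W_def contributors_def)
    have lam_part: "(\<Sum>X\<in>W r. (lam X)\<^sup>2) \<le> lam_mass r"
      unfolding lam_mass_def using W by (intro sum_mono2) (auto simp: finite_paulis)
    have "inj_on (\<lambda>X. pauli_mult X Z) (W r)"
      using W(1) pauli_mult_cancel_right[OF Z] by (metis inj_onI)
    then have "(\<Sum>X\<in>W r. (mu (pauli_mult X Z))\<^sup>2) = (\<Sum>Y\<in>(\<lambda>X. pauli_mult X Z) ` W r. (mu Y)\<^sup>2)"
      by (simp add: sum.reindex)
    also have "\<dots> \<le> mu_mass (pauli_mult r Z)"
      unfolding mu_mass_def using W by (intro sum_mono2) (auto simp: finite_paulis)
    finally have mu_part: "(\<Sum>X\<in>W r. (mu (pauli_mult X Z))\<^sup>2) \<le> mu_mass (pauli_mult r Z)" .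
    have "(\<Sum>X\<in>W r. \<bar>lam X\<bar> * \<bar>mu (pauli_mult X Z)\<bar>)\<^sup>2
        \<le> (\<Sum>X\<in>W r. \<bar>lam X\<bar>\<^sup>2) * (\<Sum>X\<in>W r. \<bar>mu (pauli_mult X Z)\<bar>\<^sup>2)"
      by (rule Cauchy_Schwarz_ineq_sum)
    also have "\<dots> \<le> lam_mass r * mu_mass (pauli_mult r Z)"
      using lam_part mu_part by (simp add: mult_mono sum_nonneg lam_mass_nonneg)
    finally show "(\<Sum>X\<in>W r. \<bar>lam X\<bar> * \<bar>mu (pauli_mult X Z)\<bar>)\<^sup>2 \<le> lam_mass r * mu_mass (pauli_mult r Z)" .
  qed simp
  finally show ?thesis by (simp add: mult.commute)
qed

lemma card_supp_le_if_contributor: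
  assumes X: "X \<in> contributors Z" and Z: "Z \<in> paulis n"
  shows "card (supp Z) \<le> k + k'"
proof -
  have X': "X \<in> paulis n" "card (supp X) \<le> k" "card (supp (pauli_mult X Z)) \<le> k'"
    using X lam_local mu_local by (auto simp: contributors_def)
  have "supp Z \<subseteq> supp X \<union> supp (pauli_mult X Z)"
    using supp_pauli_mult[of X "pauli_mult X Z"] pauli_mult_cancel[OF X'(1) Z] by simp
  then have "card (supp Z) \<le> card (supp X) + card (supp (pauli_mult X Z))"
    by (meson card_Un_le card_mono finite_Un finite_supp X'(1) Z pauli_mult_in_paulis le_trans)
  then show ?thesis using X' by linarith
qed

lemma card_restrictions_le:
  assumes Z: "Z \<in> paulis n"
  shows "card (restrictions Z) \<le> (3 * (k + k') + 1) ^ k"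
proof (cases "contributors Z = {}")
  case True
  then show ?thesis by (simp add: restrictions_def)
next
  case False
  then have card_Z: "card (supp Z) \<le> k + k'"
    using card_supp_le_if_contributor[OF _ Z] by blast
  define graph where "graph r = (\<lambda>i. (i, r i)) ` supp r" for r :: "nat \<Rightarrow> nat"
  have "graph (pauli_restrict X (supp Z)) \<in> {T. T \<subseteq> supp Z \<times> {1, 2, 3} \<and> card T \<le> k}"
    if "X \<in> contributors Z" for X
  proof -
    from that have XP: "X \<in> paulis n" and "card (supp X) \<le> k"
      using lam_local by (auto simp: contributors_def)
    let ?r = "pauli_restrict X (supp Z)"
    have "graph ?r \<subseteq> supp Z \<times> {1, 2, 3}"
    proof
      fix p assume "p \<in> graph ?r"
      then obtain i where "i \<in> supp Z" "X i \<noteq> 0" "p = (i, X i)"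
        by (auto simp: graph_def supp_def pauli_restrict_def split: if_splits)
      with less_4_cases[OF paulis_less_4[OF XP, of i]] show "p \<in> supp Z \<times> {1, 2, 3}" by auto
    qed
    moreover have "card (graph ?r) \<le> card (supp ?r)"
      unfolding graph_def by (rule card_image_le) (simp add: finite_supp[OF XP])
    moreover have "card (supp ?r) \<le> card (supp X)"
      using finite_supp[OF XP] by (intro card_mono) auto
    ultimately show ?thesis using \<open>card (supp X) \<le> k\<close> by simp
  qed
  then have "graph ` restrictions Z \<subseteq> {T. T \<subseteq> supp Z \<times> {1, 2, 3} \<and> card T \<le> k}"
    unfolding restrictions_def by blast
  then have "card (graph ` restrictions Z) \<le> card {T. T \<subseteq> supp Z \<times> {1::nat, 2, 3} \<and> card T \<le> k}"
    using finite_supp[OF Z] by (intro card_mono) auto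
  also have "\<dots> \<le> (card (supp Z \<times> {1::nat, 2, 3}) + 1) ^ k"
    using finite_supp[OF Z] by (intro card_subsets_card_le) simp
  also have "\<dots> \<le> (3 * (k + k') + 1) ^ k"
    using card_Z by (simp add: card_cartesian_product power_mono)
  finally show ?thesis
    using inj_pauli_graph by (simp add: card_image graph_def inj_on_subset)
qed

definition overlap_sum :: "(nat \<Rightarrow> nat) set \<Rightarrow> (nat \<Rightarrow> nat) set \<Rightarrow> real" where
  "overlap_sum A B = (\<Sum>r\<in>A. \<Sum>q\<in>{q\<in>B. supp r \<inter> supp q \<noteq> {}}. lam_mass r * mu_mass q)"

lemma comm_weight_sq_le_restrictions:
  assumes Z: "Z \<in> paulis n"
  shows "(comm_weight n lam mu Z)\<^sup>2
    \<le> real ((3 * (k + k') + 1) ^ k) * (\<Sum>r\<in>restrictions Z. lam_mass r * mu_mass (pauli_mult r Z))"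
proof -
  have "real (card (restrictions Z)) \<le> real ((3 * (k + k') + 1) ^ k)"
    using card_restrictions_le[OF Z] by (simp only: of_nat_le_iff)
  then have "real (card (restrictions Z)) * (\<Sum>r\<in>restrictions Z. lam_mass r * mu_mass (pauli_mult r Z))
      \<le> real ((3 * (k + k') + 1) ^ k) * (\<Sum>r\<in>restrictions Z. lam_mass r * mu_mass (pauli_mult r Z))"
    by (rule mult_right_mono) (simp add: sum_nonneg lam_mass_nonneg mu_mass_nonneg)
  then show ?thesis using comm_weight_sq_le[OF Z] by linarith
qed

lemma sum_mu_mass_restrictions_le:
  assumes r: "r \<in> paulis n" and Zs: "Zs \<subseteq> paulis n"
  shows "(\<Sum>Z\<in>{Z\<in>Zs. r \<in> restrictions Z}. mu_mass (pauli_mult r Z))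
    \<le> (\<Sum>q\<in>{q\<in>paulis n. supp r \<inter> supp q \<noteq> {} \<and> pauli_mult r q \<in> Zs}. mu_mass q)"
proof -
  have "inj_on (pauli_mult r) {Z\<in>Zs. r \<in> restrictions Z}"
    by (rule inj_on_subset[OF bij_betw_imp_inj_on[OF bij_betw_pauli_mult[OF r]]]) (use Zs in blast)
  then have "(\<Sum>Z\<in>{Z\<in>Zs. r \<in> restrictions Z}. mu_mass (pauli_mult r Z))
      = (\<Sum>q\<in>pauli_mult r ` {Z\<in>Zs. r \<in> restrictions Z}. mu_mass q)"
    by (simp add: sum.reindex)
  also have "\<dots> \<le> (\<Sum>q\<in>{q\<in>paulis n. supp r \<inter> supp q \<noteq> {} \<and> pauli_mult r q \<in> Zs}. mu_mass q)"
  proof (rule sum_mono2)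
    show "pauli_mult r ` {Z\<in>Zs. r \<in> restrictions Z}
        \<subseteq> {q\<in>paulis n. supp r \<inter> supp q \<noteq> {} \<and> pauli_mult r q \<in> Zs}"
    proof
      fix q assume "q \<in> pauli_mult r ` {Z\<in>Zs. r \<in> restrictions Z}"
      then obtain Z X where Z: "Z \<in> Zs" and X: "X \<in> contributors Z"
        and q: "q = pauli_mult r Z" and r_eq: "r = pauli_restrict X (supp Z)"
        by (auto simp: restrictions_def)
      have "Z \<in> paulis n" using Z Zs by blast
      from contributor_restriction[OF X this] Z
      show "q \<in> {q\<in>paulis n. supp r \<inter> supp q \<noteq> {} \<and> pauli_mult r q \<in> Zs}"
        unfolding q r_eq by simp
    qed
  qed (simp_all add: finite_paulis mu_mass_nonneg)
  finally show ?thesis .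
qed

lemma sum_comm_weight_sq_le_pairs:
  assumes Zs: "Zs \<subseteq> paulis n"
  shows "(\<Sum>Z\<in>Zs. (comm_weight n lam mu Z)\<^sup>2) \<le> real ((3 * (k + k') + 1) ^ k) *
    (\<Sum>r\<in>paulis n. \<Sum>q\<in>{q\<in>paulis n. supp r \<inter> supp q \<noteq> {} \<and> pauli_mult r q \<in> Zs}.
       lam_mass r * mu_mass q)"
proof -
  let ?N = "real ((3 * (k + k') + 1) ^ k)"
  have "(\<Sum>Z\<in>Zs. (comm_weight n lam mu Z)\<^sup>2)
      \<le> (\<Sum>Z\<in>Zs. ?N * (\<Sum>r\<in>restrictions Z. lam_mass r * mu_mass (pauli_mult r Z)))"
    using Zs by (intro sum_mono comm_weight_sq_le_restrictions) blast
  also have "\<dots> = ?N * (\<Sum>r\<in>paulis n. \<Sum>Z\<in>{Z\<in>Zs. r \<in> restrictions Z}. lam_mass r * mu_mass (pauli_mult r Z))"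
  proof -
    have "restrictions Z = {r\<in>paulis n. r \<in> restrictions Z}" if "Z \<in> Zs" for Z
      using that Zs contributor_restriction(1) by (auto simp: restrictions_def)
    then have "(\<Sum>Z\<in>Zs. \<Sum>r\<in>restrictions Z. lam_mass r * mu_mass (pauli_mult r Z))
        = (\<Sum>Z\<in>Zs. \<Sum>r\<in>{r\<in>paulis n. r \<in> restrictions Z}. lam_mass r * mu_mass (pauli_mult r Z))"
      by (intro sum.cong) auto
    also have "\<dots> = (\<Sum>r\<in>paulis n. \<Sum>Z\<in>{Z\<in>Zs. r \<in> restrictions Z}. lam_mass r * mu_mass (pauli_mult r Z))"
      using Zs finite_paulis finite_subset by (intro sum.swap_restrict) auto
    finally show ?thesis by (simp only: sum_distrib_left[symmetric])
  qed
  also have "\<dots> \<le> ?N * (\<Sum>r\<in>paulis n. \<Sum>q\<in>{q\<in>paulis n. supp r \<inter> supp q \<noteq> {} \<and> pauli_mult r q \<in> Zs}.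
       lam_mass r * mu_mass q)"
  proof (intro mult_left_mono sum_mono)
    fix r assume "r \<in> paulis n"
    from mult_left_mono[OF sum_mu_mass_restrictions_le[OF this Zs] lam_mass_nonneg]
    show "(\<Sum>Z\<in>{Z\<in>Zs. r \<in> restrictions Z}. lam_mass r * mu_mass (pauli_mult r Z))
        \<le> (\<Sum>q\<in>{q\<in>paulis n. supp r \<inter> supp q \<noteq> {} \<and> pauli_mult r q \<in> Zs}. lam_mass r * mu_mass q)"
      by (simp add: sum_distrib_left)
  qed simp
  finally show ?thesis .
qed

lemma pairs_le_overlap_sum:
  assumes A: "A \<subseteq> paulis n" and B: "B \<subseteq> paulis n"
    and charge: "\<And>r q. r \<in> paulis n \<Longrightarrow> q \<in> paulis n \<Longrightarrow> P r q \<Longrightarrow> r \<in> A \<or> q \<in> B"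
  shows "(\<Sum>r\<in>paulis n. \<Sum>q\<in>{q\<in>paulis n. supp r \<inter> supp q \<noteq> {} \<and> P r q}. lam_mass r * mu_mass q)
    \<le> overlap_sum A (paulis n) + overlap_sum (paulis n) B"
proof -
  let ?f = "\<lambda>r q. lam_mass r * mu_mass q"
  have "finite B" using B finite_paulis finite_subset by blast
  have "(\<Sum>r\<in>paulis n. \<Sum>q\<in>{q\<in>paulis n. supp r \<inter> supp q \<noteq> {} \<and> P r q}. ?f r q)
      \<le> (\<Sum>r\<in>paulis n. (\<Sum>q\<in>{q\<in>paulis n. supp r \<inter> supp q \<noteq> {} \<and> r \<in> A}. ?f r q)
                        + (\<Sum>q\<in>{q\<in>B. supp r \<inter> supp q \<noteq> {}}. ?f r q))"
    using B charge
    by (intro sum_mono sum_le_sum_Un) (auto simp: finite_paulis \<open>finite B\<close> lam_mass_nonneg mu_mass_nonneg)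
  also have "\<dots> = overlap_sum A (paulis n) + overlap_sum (paulis n) B"
  proof -
    have "(\<Sum>r\<in>paulis n. \<Sum>q\<in>{q\<in>paulis n. supp r \<inter> supp q \<noteq> {} \<and> r \<in> A}. ?f r q)
        = (\<Sum>r\<in>A. \<Sum>q\<in>{q\<in>paulis n. supp r \<inter> supp q \<noteq> {}}. ?f r q)"
      using A finite_paulis by (intro sum.mono_neutral_cong_right) auto
    then show ?thesis by (simp add: overlap_sum_def sum.distrib)
  qed
  finally show ?thesis .
qed

lemma overlap_sum_right_le:
  fixes h :: real
  assumes lam_site: "\<And>j. (\<Sum>X\<in>{X\<in>paulis n. j \<in> supp X}. (lam X)\<^sup>2) \<le> h" and B: "B \<subseteq> paulis n"
  shows "overlap_sum (paulis n) B \<le> k' * 2^k * h * (\<Sum>q\<in>B. mu_mass q)"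
proof -
  have h: "0 \<le> h" by (rule site_bound_nonneg[OF lam_site])
  have "overlap_sum (paulis n) B
      = (\<Sum>q\<in>B. mu_mass q * (\<Sum>r\<in>{r\<in>paulis n. supp r \<inter> supp q \<noteq> {}}. lam_mass r))"
    unfolding overlap_sum_def using B finite_paulis finite_subset
    by (subst sum.swap_restrict) (auto simp: sum_distrib_left mult.commute)
  also have "\<dots> \<le> (\<Sum>q\<in>B. k' * 2^k * h * mu_mass q)"
  proof (rule sum_mono)
    fix q
    show "mu_mass q * (\<Sum>r\<in>{r\<in>paulis n. supp r \<inter> supp q \<noteq> {}}. lam_mass r) \<le> k' * 2^k * h * mu_mass q"
    proof (cases "mu_mass q = 0")
      case False
      then have q: "finite (supp q)" "card (supp q) \<le> k'" using mu_mass_nonzero by auto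
      have "(\<Sum>r\<in>{r\<in>paulis n. supp r \<inter> supp q \<noteq> {}}. lam_mass r) \<le> card (supp q) * (2^k * h)"
        by (rule sum_lam_mass_overlapping_le[OF lam_site q(1)])
      also have "\<dots> \<le> k' * (2^k * h)"
        using q(2) h by (intro mult_right_mono) auto
      finally have "mu_mass q * (\<Sum>r\<in>{r\<in>paulis n. supp r \<inter> supp q \<noteq> {}}. lam_mass r)
          \<le> mu_mass q * (k' * (2^k * h))"
        by (rule mult_left_mono[OF _ mu_mass_nonneg])
      then show ?thesis by (simp add: mult_ac)
    qed simp
  qed
  finally show ?thesis by (simp add: sum_distrib_left)
qed

lemma overlap_sum_left_le:
  fixes g :: real
  assumes mu_site: "\<And>j. (\<Sum>Y\<in>{Y\<in>paulis n. j \<in> supp Y}. (mu Y)\<^sup>2) \<le> g"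
  shows "overlap_sum A (paulis n) \<le> k * (k' + 1)^k * g * (\<Sum>r\<in>A. lam_mass r)"
proof -
  have g: "0 \<le> g" by (rule site_bound_nonneg[OF mu_site])
  have "overlap_sum A (paulis n) = (\<Sum>r\<in>A. lam_mass r * (\<Sum>q\<in>{q\<in>paulis n. supp q \<inter> supp r \<noteq> {}}. mu_mass q))"
    unfolding overlap_sum_def by (simp add: sum_distrib_left Int_commute)
  also have "\<dots> \<le> (\<Sum>r\<in>A. k * (k' + 1)^k * g * lam_mass r)"
  proof (rule sum_mono)
    fix r
    show "lam_mass r * (\<Sum>q\<in>{q\<in>paulis n. supp q \<inter> supp r \<noteq> {}}. mu_mass q) \<le> k * (k' + 1)^k * g * lam_mass r"
    proof (cases "lam_mass r = 0")
      case False
      then have r: "finite (supp r)" "card (supp r) \<le> k" using lam_mass_nonzero by auto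
      have "(\<Sum>q\<in>{q\<in>paulis n. supp q \<inter> supp r \<noteq> {}}. mu_mass q) \<le> card (supp r) * (real ((k' + 1)^k) * g)"
        by (rule sum_mu_mass_overlapping_le[OF mu_site r(1)])
      also have "\<dots> \<le> k * (real ((k' + 1)^k) * g)"
        using r(2) g by (intro mult_right_mono) auto
      finally have "lam_mass r * (\<Sum>q\<in>{q\<in>paulis n. supp q \<inter> supp r \<noteq> {}}. mu_mass q)
          \<le> lam_mass r * (k * (real ((k' + 1)^k) * g))"
        by (rule mult_left_mono[OF _ lam_mass_nonneg])
      then show ?thesis by (simp add: mult_ac)
    qed simp
  qed
  finally show ?thesis by (simp add: sum_distrib_left)
qed

lemma sum_comm_weight_sq_le_counting:
  fixes h :: real
  assumes lam_site: "\<And>j. (\<Sum>X\<in>{X\<in>paulis n. j \<in> supp X}. (lam X)\<^sup>2) \<le> h"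
  shows "(\<Sum>Z\<in>paulis n. (comm_weight n lam mu Z)\<^sup>2)
    \<le> real ((3 * (k + k') + 1) ^ k * (k' * 2 ^ k * (k' + 1) ^ k)) * h * (\<Sum>Y\<in>paulis n. (mu Y)\<^sup>2)"
proof -
  let ?N = "real ((3 * (k + k') + 1) ^ k)"
  have h: "0 \<le> h" by (rule site_bound_nonneg[OF lam_site])
  have "(\<Sum>Z\<in>paulis n. (comm_weight n lam mu Z)\<^sup>2)
      \<le> ?N * (\<Sum>r\<in>paulis n. \<Sum>q\<in>{q\<in>paulis n. supp r \<inter> supp q \<noteq> {} \<and> pauli_mult r q \<in> paulis n}.
                lam_mass r * mu_mass q)"
    by (rule sum_comm_weight_sq_le_pairs) simp
  also have "\<dots> \<le> ?N * (overlap_sum {} (paulis n) + overlap_sum (paulis n) (paulis n))"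
    by (intro mult_left_mono pairs_le_overlap_sum) auto
  finally have pairs: "(\<Sum>Z\<in>paulis n. (comm_weight n lam mu Z)\<^sup>2) \<le> ?N * overlap_sum (paulis n) (paulis n)"
    by (simp add: overlap_sum_def)
  have "overlap_sum (paulis n) (paulis n) \<le> k' * 2^k * h * (\<Sum>q\<in>paulis n. mu_mass q)"
    by (rule overlap_sum_right_le[OF lam_site]) simp
  also have "\<dots> \<le> k' * 2^k * h * (real ((k' + 1)^k) * (\<Sum>Y\<in>paulis n. (mu Y)\<^sup>2))"
    using sum_mu_mass_le[of "{}"] h by (intro mult_left_mono) simp_all
  finally have "(\<Sum>Z\<in>paulis n. (comm_weight n lam mu Z)\<^sup>2)
      \<le> ?N * (k' * 2^k * h * (real ((k' + 1)^k) * (\<Sum>Y\<in>paulis n. (mu Y)\<^sup>2)))"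
    using pairs by (meson mult_left_mono of_nat_0_le_iff order_trans)
  then show ?thesis by (simp add: algebra_simps)
qed

lemma sum_comm_weight_sq_site_le_counting:
  fixes h g :: real
  assumes lam_site: "\<And>j. (\<Sum>X\<in>{X\<in>paulis n. j \<in> supp X}. (lam X)\<^sup>2) \<le> h"
    and mu_site: "\<And>j. (\<Sum>Y\<in>{Y\<in>paulis n. j \<in> supp Y}. (mu Y)\<^sup>2) \<le> g"
  shows "(\<Sum>Z\<in>{Z\<in>paulis n. i \<in> supp Z}. (comm_weight n lam mu Z)\<^sup>2)
    \<le> real ((3 * (k + k') + 1) ^ k * ((k + k') * 2 ^ k * (k' + 1) ^ k)) * h * g"
proof -
  let ?N = "real ((3 * (k + k') + 1) ^ k)" and ?A = "{x\<in>paulis n. i \<in> supp x}"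
  have h: "0 \<le> h" by (rule site_bound_nonneg[OF lam_site])
  have g: "0 \<le> g" by (rule site_bound_nonneg[OF mu_site])
  have "(\<Sum>Z\<in>?A. (comm_weight n lam mu Z)\<^sup>2)
      \<le> ?N * (\<Sum>r\<in>paulis n. \<Sum>q\<in>{q\<in>paulis n. supp r \<inter> supp q \<noteq> {} \<and> pauli_mult r q \<in> ?A}.
                lam_mass r * mu_mass q)"
    by (rule sum_comm_weight_sq_le_pairs) auto
  also have "\<dots> \<le> ?N * (overlap_sum ?A (paulis n) + overlap_sum (paulis n) ?A)"
    using supp_pauli_mult by (intro mult_left_mono pairs_le_overlap_sum) auto
  finally have pairs: "(\<Sum>Z\<in>?A. (comm_weight n lam mu Z)\<^sup>2)
      \<le> ?N * (overlap_sum ?A (paulis n) + overlap_sum (paulis n) ?A)" .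
  have "overlap_sum ?A (paulis n) \<le> k * (k' + 1)^k * g * (\<Sum>r\<in>?A. lam_mass r)"
    by (rule overlap_sum_left_le[OF mu_site])
  also have "\<dots> \<le> k * (k' + 1)^k * g * (2^k * h)"
    using g by (intro mult_left_mono sum_lam_mass_site_le[OF lam_site]) simp
  finally have left: "overlap_sum ?A (paulis n) \<le> k * (k' + 1)^k * g * (2^k * h)" .
  have "overlap_sum (paulis n) ?A \<le> k' * 2^k * h * (\<Sum>q\<in>?A. mu_mass q)"
    by (rule overlap_sum_right_le[OF lam_site]) auto
  also have "\<dots> \<le> k' * 2^k * h * (real ((k' + 1)^k) * g)"
    using h by (intro mult_left_mono sum_mu_mass_site_le[OF mu_site]) simp
  finally have right: "overlap_sum (paulis n) ?A \<le> k' * 2^k * h * (real ((k' + 1)^k) * g)" .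
  from pairs left right have "(\<Sum>Z\<in>?A. (comm_weight n lam mu Z)\<^sup>2)
      \<le> ?N * (k * (k' + 1)^k * g * (2^k * h) + k' * 2^k * h * (real ((k' + 1)^k) * g))"
    by (meson add_mono mult_left_mono of_nat_0_le_iff order_trans)
  then show ?thesis by (simp add: algebra_simps)
qed

lemma comm_weight_eq_0_if_k_0:
  assumes "k = 0"
  shows "comm_weight n lam mu Z = 0"
proof -
  have "contributors Z = {}"
  proof (rule equals0I)
    fix X assume "X \<in> contributors Z"
    then have X: "X \<in> paulis n" "card (supp X) \<le> k" "anticommute_at_some_site X (pauli_mult X Z)"
      using lam_local by (auto simp: contributors_def)
    then have "supp X \<noteq> {}" by (auto simp: anticommute_at_some_site_def supp_def)
    with X assms show False using finite_supp[OF X(1)] by simp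
  qed
  then show ?thesis by (simp add: comm_weight_eq)
qed

lemma sum_comm_weight_sq_le:
  fixes h :: real
  assumes lam_site: "\<And>j. (\<Sum>X\<in>{X\<in>paulis n. j \<in> supp X}. (lam X)\<^sup>2) \<le> h"
  shows "(\<Sum>Z\<in>paulis n. (comm_weight n lam mu Z)\<^sup>2)
    \<le> (4 * (real k' + real k)) ^ (3 * k) * h * (\<Sum>Y\<in>paulis n. (mu Y)\<^sup>2)"
proof (cases "k = 0")
  case True
  then show ?thesis
    using site_bound_nonneg[OF lam_site] by (simp add: comm_weight_eq_0_if_k_0 sum_nonneg)
next
  case False
  have "real ((3 * (k + k') + 1) ^ k * (k' * 2 ^ k * (k' + 1) ^ k))
      \<le> real ((3 * (k + k') + 1) ^ k * ((k + k') * 2 ^ k * (k' + 1) ^ k))"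
    by simp
  also have "\<dots> \<le> (4 * (real k' + real k)) ^ (3 * k)"
    using False by (intro counting_constant_le) simp
  finally have const: "real ((3 * (k + k') + 1) ^ k * (k' * 2 ^ k * (k' + 1) ^ k))
      \<le> (4 * (real k' + real k)) ^ (3 * k)" .
  have "0 \<le> h * (\<Sum>Y\<in>paulis n. (mu Y)\<^sup>2)"
    using site_bound_nonneg[OF lam_site] by (simp add: sum_nonneg)
  from mult_right_mono[OF const this] sum_comm_weight_sq_le_counting[OF lam_site] show ?thesis
    unfolding mult.assoc by linarith
qed

lemma sum_comm_weight_sq_site_le:
  fixes h g :: real
  assumes lam_site: "\<And>j. (\<Sum>X\<in>{X\<in>paulis n. j \<in> supp X}. (lam X)\<^sup>2) \<le> h"
    and mu_site: "\<And>j. (\<Sum>Y\<in>{Y\<in>paulis n. j \<in> supp Y}. (mu Y)\<^sup>2) \<le> g"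
  shows "(\<Sum>Z\<in>{Z\<in>paulis n. i \<in> supp Z}. (comm_weight n lam mu Z)\<^sup>2)
    \<le> (4 * (real k' + real k)) ^ (3 * k) * h * g"
proof (cases "k = 0")
  case True
  then show ?thesis
    using site_bound_nonneg[OF lam_site] site_bound_nonneg[OF mu_site]
    by (simp add: comm_weight_eq_0_if_k_0)
next
  case False
  then have const: "real ((3 * (k + k') + 1) ^ k * ((k + k') * 2 ^ k * (k' + 1) ^ k))
      \<le> (4 * (real k' + real k)) ^ (3 * k)"
    by (intro counting_constant_le) simp
  have "0 \<le> h * g"
    using site_bound_nonneg[OF lam_site] site_bound_nonneg[OF mu_site] by simp
  from mult_right_mono[OF const this] sum_comm_weight_sq_site_le_counting[OF lam_site mu_site, of i]
  show ?thesis
    unfolding mult.assoc by linarith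
qed

definition comm_coeff :: "(nat \<Rightarrow> nat) \<Rightarrow> complex" where
  "comm_coeff Z = pauli_conv n (\<lambda>X. complex_of_real (lam X)) (\<lambda>Y. complex_of_real (mu Y)) Z
                - pauli_conv n (\<lambda>Y. complex_of_real (mu Y)) (\<lambda>X. complex_of_real (lam X)) Z"

abbreviation op_lam :: "complex mat" where
  "op_lam \<equiv> op_of n (\<lambda>X. complex_of_real (lam X))"

abbreviation op_mu :: "complex mat" where
  "op_mu \<equiv> op_of n (\<lambda>Y. complex_of_real (mu Y))"

lemma commutator_op_lam_op_mu: "commutator op_lam op_mu = op_of n comm_coeff"
  unfolding commutator_def op_of_mult op_of_diff comm_coeff_def ..

lemma lam_site_le_loc2_norm: "(\<Sum>X\<in>{X\<in>paulis n. j \<in> supp X}. (lam X)\<^sup>2) \<le> (loc2_norm n op_lam)\<^sup>2"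
proof -
  have "pauli_coeff n op_lam = (\<lambda>X. complex_of_real (lam X))"
    unfolding pauli_coeff_op_of using lam_local by fastforce
  then show ?thesis using site_mass_le_loc2_norm[of n op_lam j] by simp
qed

lemma mu_site_le_loc2_norm: "(\<Sum>Y\<in>{Y\<in>paulis n. j \<in> supp Y}. (mu Y)\<^sup>2) \<le> (loc2_norm n op_mu)\<^sup>2"
proof -
  have "pauli_coeff n op_mu = (\<lambda>Y. complex_of_real (mu Y))"
    unfolding pauli_coeff_op_of using mu_local by fastforce
  then show ?thesis using site_mass_le_loc2_norm[of n op_mu j] by simp
qed

lemma comm_coeff_sq_le: "Z \<in> paulis n \<Longrightarrow> (cmod (comm_coeff Z))\<^sup>2 \<le> 4 * (comm_weight n lam mu Z)\<^sup>2"
  using power_mono[OF pauli_conv_commutator_le[of Z n lam mu], of 2]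
  by (simp add: comm_coeff_def power_mult_distrib)

lemma one_le_locality_constant: "1 \<le> (4 * (real k' + real k)) ^ (3 * k)"
  by (cases "k = 0") (auto intro: one_le_power)

lemma locality_constant_le_square:
  assumes "0 \<le> x"
  shows "(4 * (real k' + real k)) ^ (3 * k) * x \<le> ((4 * (real k' + real k)) ^ (3 * k))\<^sup>2 * x"
  using one_le_locality_constant assms by (intro mult_right_mono) (simp_all add: power2_eq_square)

lemma frob_norm_commutator_le:
  "frob_norm (commutator op_lam op_mu)
     \<le> 2 * (4 * (real k' + real k)) ^ (3 * k) * loc2_norm n op_lam * frob_norm op_mu"
proof -
  let ?B = "(4 * (real k' + real k)) ^ (3 * k)" and ?h = "loc2_norm n op_lam"
  have "(\<Sum>Z\<in>paulis n. (cmod (comm_coeff Z))\<^sup>2) \<le> (\<Sum>Z\<in>paulis n. 4 * (comm_weight n lam mu Z)\<^sup>2)"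
    by (intro sum_mono comm_coeff_sq_le)
  also have "\<dots> \<le> 4 * (?B * ?h\<^sup>2 * (\<Sum>Y\<in>paulis n. (mu Y)\<^sup>2))"
    using sum_comm_weight_sq_le[OF lam_site_le_loc2_norm] by (simp add: sum_distrib_left[symmetric])
  also have "\<dots> \<le> 4 * (?B\<^sup>2 * (?h\<^sup>2 * (\<Sum>Y\<in>paulis n. (mu Y)\<^sup>2)))"
    using locality_constant_le_square[of "?h\<^sup>2 * (\<Sum>Y\<in>paulis n. (mu Y)\<^sup>2)"]
    unfolding mult.assoc by (simp add: sum_nonneg)
  also have "\<dots> = (2 * ?B * ?h)\<^sup>2 * (\<Sum>Y\<in>paulis n. (cmod (complex_of_real (mu Y)))\<^sup>2)"
    by (simp add: power_mult_distrib)
  finally show ?thesis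
    unfolding commutator_op_lam_op_mu
    using one_le_locality_constant loc2_norm_nonneg[of n op_lam] by (intro frob_norm_op_of_le) simp_all
qed

lemma loc2_norm_commutator_le:
  "loc2_norm n (commutator op_lam op_mu)
     \<le> 2 * (4 * (real k' + real k)) ^ (3 * k) * loc2_norm n op_lam * loc2_norm n op_mu"
  unfolding commutator_op_lam_op_mu
proof (rule loc2_norm_le)
  let ?B = "(4 * (real k' + real k)) ^ (3 * k)" and ?h = "loc2_norm n op_lam" and ?g = "loc2_norm n op_mu"
  show "0 \<le> 2 * ?B * ?h * ?g"
    using one_le_locality_constant loc2_norm_nonneg[of n op_lam] loc2_norm_nonneg[of n op_mu] by simp
  fix i
  have "(\<Sum>Z\<in>{Z\<in>paulis n. i \<in> supp Z}. (cmod (pauli_coeff n (op_of n comm_coeff) Z))\<^sup>2)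
      = (\<Sum>Z\<in>{Z\<in>paulis n. i \<in> supp Z}. (cmod (comm_coeff Z))\<^sup>2)"
    by (simp add: pauli_coeff_op_of)
  also have "\<dots> \<le> (\<Sum>Z\<in>{Z\<in>paulis n. i \<in> supp Z}. 4 * (comm_weight n lam mu Z)\<^sup>2)"
    by (intro sum_mono comm_coeff_sq_le) simp
  also have "\<dots> \<le> 4 * (?B * ?h\<^sup>2 * ?g\<^sup>2)"
    using sum_comm_weight_sq_site_le[OF lam_site_le_loc2_norm mu_site_le_loc2_norm, of i]
    by (simp add: sum_distrib_left[symmetric])
  also have "\<dots> \<le> 4 * (?B\<^sup>2 * (?h\<^sup>2 * ?g\<^sup>2))"
    using locality_constant_le_square[of "?h\<^sup>2 * ?g\<^sup>2"] unfolding mult.assoc by simp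
  also have "\<dots> = (2 * ?B * ?h * ?g)\<^sup>2"
    by (simp add: power_mult_distrib)
  finally show "(\<Sum>Z\<in>{Z\<in>paulis n. i \<in> supp Z}. (cmod (pauli_coeff n (op_of n comm_coeff) Z))\<^sup>2)
      \<le> (2 * ?B * ?h * ?g)\<^sup>2" .
qed

end

theorem lemma3p7:
  shows "\<exists>C::real. \<forall>(n::nat) (k::nat) (k'::nat) H G.
     is_klocal_ham n k H \<longrightarrow> is_klocal_ham n k' G \<longrightarrow>
       frob_norm (commutator H G)
         \<le> C * (4 * (real k' + real k)) ^ (3 * k) * loc2_norm n H * frob_norm G
     \<and> loc2_norm n (commutator H G)
         \<le> C * (4 * (real k' + real k)) ^ (3 * k) * loc2_norm n H * loc2_norm n G"
proof (intro exI[of _ 2] allI impI)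
  fix n k k' :: nat and H G
  assume "is_klocal_ham n k H" "is_klocal_ham n k' G"
  then obtain lam mu :: "(nat \<Rightarrow> nat) \<Rightarrow> real" where
      lam: "\<forall>X. lam X \<noteq> 0 \<longrightarrow> X \<in> paulis n \<and> X \<noteq> (\<lambda>_. 0) \<and> card (supp X) \<le> k"
      and H: "H = op_of n (\<lambda>X. complex_of_real (lam X))"
      and mu: "\<forall>Y. mu Y \<noteq> 0 \<longrightarrow> Y \<in> paulis n \<and> Y \<noteq> (\<lambda>_. 0) \<and> card (supp Y) \<le> k'"
      and G: "G = op_of n (\<lambda>Y. complex_of_real (mu Y))"
    unfolding is_klocal_ham_def by blast
  \<comment> \<open>The terms need not be non-identity: identity terms drop out of commutators.\<close>
  interpret local_pauli_coeffs n k k' lam mu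
    using lam mu by unfold_locales blast+
  show "frob_norm (commutator H G) \<le> 2 * (4 * (real k' + real k)) ^ (3 * k) * loc2_norm n H * frob_norm G
      \<and> loc2_norm n (commutator H G) \<le> 2 * (4 * (real k' + real k)) ^ (3 * k) * loc2_norm n H * loc2_norm n G"
    unfolding H G using frob_norm_commutator_le loc2_norm_commutator_le by blast
qed

end
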